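(* Let $a,b$ be integers with $0<b<a$, let $S=\langle a,a+1,\ldots,a+b\rangle$ with conductor $c$, and let $m\ge 2c-1$. Let $q$ be a positive integer with $qb<a$. Then $\mathrm D(m+qa+qb)\cap[m,\infty)$ is an ordered amenable set (that is, an ordered $(S,m,r)$-amenable set, where $r$ is its cardinality).
   Context: For $x\in S$, $\mathrm D(x)=\{\alpha\in S\mid x-\alpha\in S\}$. A set $M=\{m_1<\cdots<m_r\}\subseteq S$ with $2c-1\le m=m_1$ is $(S,m,r)$-amenable if $\mathrm D(m_i)\cap[m,\infty)\subseteq M$ for all $i$. The ground is $\{m,m+1,\ldots,m+a+b-1\}$, and the shadow of $M$ is $M\cap\{m,\ldots,m+a+b-1\}$. For a finite $M\subseteq S\cap[m,\infty)$, let $J$ be the set of $j\in\{0,\ldots,a-1\}$ such that $x-(m+b)=qa+j$ for some $x\in M$ and some integer $q\ge 0$; if $J\neq\emptyset$ let $j_0=\max J$ and let the wagon of $M$ be $W=\{x\in M\mid x-(m+b)=qa+j_0\text{ for some integer }q\}$. An element $P\in M$ is the pivot of $M$ if either $P<m+b$ and $P=\max M$, or $P=\max W$. An $(S,m,r)$-amenable set $M$ with pivot $P$ is ordered amenable if (i) its shadow is $\{m,m+1,\ldots,m+t\}$ for some integer $0\le t<a+b-1$, and (ii) whenever $s\in S\setminus M$ is such that $M\cup\{s\}$ is $(S,m,r+1)$-amenable with the same shadow as $M$, we have $s=P+a$. *)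

theory Defs
  imports Main
begin

inductive_set nsg :: "nat \<Rightarrow> nat \<Rightarrow> nat set" for a b :: nat where
  zero: "0 \<in> nsg a b"
| step: "x \<in> nsg a b \<Longrightarrow> g \<in> {a..a+b} \<Longrightarrow> x + g \<in> nsg a b"

definition conductor :: "nat set \<Rightarrow> nat" where
  "conductor S = (LEAST c. \<forall>n\<ge>c. n \<in> S)"

definition Dset :: "nat set \<Rightarrow> nat \<Rightarrow> nat set" where
  "Dset S x = {\<alpha> \<in> S. \<alpha> \<le> x \<and> x - \<alpha> \<in> S}"

definition amenable :: "nat set \<Rightarrow> nat \<Rightarrow> nat \<Rightarrow> nat set \<Rightarrow> bool" where
  "amenable S m r M \<longleftrightarrow>
     finite M \<and> M \<noteq> {} \<and> card M = r \<and> M \<subseteq> S \<and> Min M = m \<and>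
     2 * conductor S - 1 \<le> m \<and>
     (\<forall>x\<in>M. Dset S x \<inter> {m..} \<subseteq> M)"

definition shadow :: "nat \<Rightarrow> nat \<Rightarrow> nat \<Rightarrow> nat set \<Rightarrow> nat set" where
  "shadow a b m M = M \<inter> {m..<m+a+b}"

definition Jset :: "nat \<Rightarrow> nat \<Rightarrow> nat \<Rightarrow> nat set \<Rightarrow> nat set" where
  "Jset a b m M = {j. j < a \<and> (\<exists>x\<in>M. \<exists>q::int. q \<ge> 0 \<and>
       int x - int (m + b) = q * int a + int j)}"

definition wagon :: "nat \<Rightarrow> nat \<Rightarrow> nat \<Rightarrow> nat set \<Rightarrow> nat set" where
  "wagon a b m M = {x \<in> M. \<exists>q::int. int x - int (m + b) = q * int a + int (Max (Jset a b m M))}"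

definition is_pivot :: "nat \<Rightarrow> nat \<Rightarrow> nat \<Rightarrow> nat set \<Rightarrow> nat \<Rightarrow> bool" where
  "is_pivot a b m M P \<longleftrightarrow> P \<in> M \<and>
     ((P < m + b \<and> P = Max M) \<or>
      (Jset a b m M \<noteq> {} \<and> P = Max (wagon a b m M)))"

definition ordered_amenable :: "nat \<Rightarrow> nat \<Rightarrow> nat \<Rightarrow> nat \<Rightarrow> nat set \<Rightarrow> bool" where
  "ordered_amenable a b m r M \<longleftrightarrow>
     amenable (nsg a b) m r M \<and>
     (\<exists>P. is_pivot a b m M P \<and>
        (\<exists>t. t < a + b - 1 \<and> shadow a b m M = {m..m+t}) \<and>
        (\<forall>s\<in>nsg a b - M.
            amenable (nsg a b) m (r + 1) (M \<union> {s}) \<and>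
            shadow a b m (M \<union> {s}) = shadow a b m M \<longrightarrow> s = P + a))"

end

theory Submission
  imports Defs
begin

text \<open>
  The semigroup \<open>S = \<langle>a, \<dots>, a + b\<rangle>\<close> is the union of the levels \<open>[k a, k (a + b)]\<close>, and every
  \<open>n \<ge> m\<close> lies in \<open>S\<close>. Hence for \<open>x = m + q (a + b)\<close> the set \<open>M = D(x) \<inter> [m, \<infinity>)\<close> consists
  of the \<open>z \<in> [m, x]\<close> with \<open>x - z \<in> S\<close>, and \<open>q b < a\<close> forces \<open>x - z\<close> into a level \<open>k \<le> q\<close>.
  The levels \<open>k < q\<close> keep \<open>z \<ge> m + a + b\<close>, so the shadow is the top level \<open>[m, m + q b]\<close>;
  reading off residues modulo \<open>a\<close> level by level, the largest residue is \<open>(q - 1) b\<close>,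
  attained by \<open>x\<close>, which is therefore the pivot.

  Condition (ii) holds vacuously: a shadow-preserving amenable extension by \<open>s\<close> forces
  \<open>s \<ge> m + a + b\<close> and \<open>s - a, s - a - b \<in> M\<close>, so \<open>u = x - s + a\<close> and \<open>u + b\<close> both lie
  in \<open>S\<close> below \<open>q (a + b)\<close>. They must share a level, whence \<open>u - a = x - s \<in> S\<close>
  and \<open>s\<close> was already in \<open>M\<close>.
\<close>

lemma mem_nsg_iff: "n \<in> nsg a b \<longleftrightarrow> (\<exists>k. k * a \<le> n \<and> n \<le> k * (a + b))"
proof
  assume "n \<in> nsg a b"
  then show "\<exists>k. k * a \<le> n \<and> n \<le> k * (a + b)"
  proof induction
    case zero
    then show ?case by auto
  next
    case (step x g)
    then obtain k where "k * a \<le> x" "x \<le> k * (a + b)" by auto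
    with \<open>g \<in> {a..a+b}\<close> show ?case by (intro exI[of _ "Suc k"]) auto
  qed
next
  assume "\<exists>k. k * a \<le> n \<and> n \<le> k * (a + b)"
  then obtain k where "k * a \<le> n" "n \<le> k * (a + b)" by auto
  then show "n \<in> nsg a b"
  proof (induction k arbitrary: n)
    case 0
    then show ?case by (auto intro: nsg.zero)
  next
    case (Suc k)
    define g where "g = min (a + b) (n - k * a)"
    have "n - g \<in> nsg a b"
      using Suc.prems by (intro Suc.IH) (auto simp: g_def min_def algebra_simps)
    moreover have "g \<in> {a..a+b}" "g \<le> n"
      using Suc.prems by (auto simp: g_def min_def algebra_simps)
    ultimately show ?case using nsg.step[of "n - g" a b g] by simp
  qed
qed

lemma nsg_add: "x \<in> nsg a b \<Longrightarrow> y \<in> nsg a b \<Longrightarrow> x + y \<in> nsg a b"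
proof -
  assume "x \<in> nsg a b" "y \<in> nsg a b"
  then obtain k l where "k * a \<le> x" "x \<le> k * (a + b)" "l * a \<le> y" "y \<le> l * (a + b)"
    unfolding mem_nsg_iff by blast
  then show "x + y \<in> nsg a b"
    unfolding mem_nsg_iff by (intro exI[of _ "k + l"]) (simp add: add_mult_distrib)
qed

lemma nsg_not_mem_below:
  assumes "0 < n" "n < a"
  shows "n \<notin> nsg a b"
proof
  assume "n \<in> nsg a b"
  then obtain k where "k * a \<le> n" "n \<le> k * (a + b)" unfolding mem_nsg_iff by blast
  then show False using assms by (cases k) auto
qed

lemma le_of_mult_le_mult_add:
  fixes k q a b :: nat
  assumes "k * a \<le> q * (a + b)" "q * b < a"
  shows "k \<le> q"
proof (rule ccontr)
  assume "\<not> k \<le> q"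
  then have "Suc q * a \<le> k * a" by (intro mult_le_mono1) simp
  then show False using assms by (simp add: algebra_simps)
qed

lemma nsg_bounded_level:
  assumes "n \<in> nsg a b" "n \<le> q * (a + b)" "q * b < a"
  obtains k where "k \<le> q" "k * a \<le> n" "n \<le> k * (a + b)"
proof -
  obtain k where "k * a \<le> n" "n \<le> k * (a + b)" using assms(1) unfolding mem_nsg_iff by blast
  moreover have "k \<le> q"
    using le_of_mult_le_mult_add[of k a q b] calculation assms(2,3) by linarith
  ultimately show thesis using that by blast
qed

lemma mem_nsg_of_square_le:
  assumes "0 < a" "0 < b" "a * a \<le> n"
  shows "n \<in> nsg a b"
proof -
  define k where "k = n div a"
  have "k * a \<le> n" by (simp add: k_def)
  moreover have "n < k * a + a"
    unfolding k_def using div_mult_mod_eq[of n a] mod_less_divisor[OF assms(1), of n] by linarith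
  moreover have "a \<le> k" using assms(1,3) by (simp add: k_def less_eq_div_iff_mult_less_eq)
  then have "a \<le> k * b" using mult_le_mono[of a k 1 b] assms(2) by simp
  ultimately show ?thesis
    unfolding mem_nsg_iff by (intro exI[of _ k]) (auto simp: algebra_simps)
qed

lemma mem_nsg_of_conductor_le:
  assumes "0 < a" "0 < b" "conductor (nsg a b) \<le> n"
  shows "n \<in> nsg a b"
proof -
  have "\<forall>n\<ge>a * a. n \<in> nsg a b" using mem_nsg_of_square_le assms(1,2) by blast
  then have "\<forall>n\<ge>conductor (nsg a b). n \<in> nsg a b"
    unfolding conductor_def by (rule LeastI)
  then show ?thesis using assms(3) by blast
qed

lemma conductor_nsg_pos:
  assumes "1 < a" "0 < b"
  shows "0 < conductor (nsg a b)"
proof -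
  have "\<not> conductor (nsg a b) \<le> 1"
    using mem_nsg_of_conductor_le[of a b 1] nsg_not_mem_below[of 1 a b] assms by auto
  then show ?thesis by simp
qed

lemma mem_nsg_above:
  assumes "1 < a" "0 < b" "2 * conductor (nsg a b) - 1 \<le> m" "m \<le> n"
  shows "n \<in> nsg a b"
  using mem_nsg_of_conductor_le[of a b n] conductor_nsg_pos[OF assms(1,2)] assms by linarith

lemma Dset_trans:
  assumes "\<And>u v. u \<in> S \<Longrightarrow> v \<in> S \<Longrightarrow> u + v \<in> S"
    and "z \<in> Dset S y" "y \<in> Dset S x"
  shows "z \<in> Dset S x"
proof -
  have "x - z = (x - y) + (y - z)" using assms(2,3) by (auto simp: Dset_def)
  also have "\<dots> \<in> S" using assms(2,3) by (intro assms(1)) (auto simp: Dset_def)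
  finally show ?thesis using assms(2,3) by (auto simp: Dset_def)
qed

lemma mem_Dset_atLeast_iff:
  assumes "\<And>n. m \<le> n \<Longrightarrow> n \<in> S"
  shows "z \<in> Dset S x \<inter> {m..} \<longleftrightarrow> m \<le> z \<and> z \<le> x \<and> x - z \<in> S"
  using assms by (auto simp: Dset_def)

lemma amenable_Dset_atLeast:
  assumes "\<And>u v. u \<in> S \<Longrightarrow> v \<in> S \<Longrightarrow> u + v \<in> S"
    and "m \<in> Dset S x" "2 * conductor S - 1 \<le> m"
  shows "amenable S m (card (Dset S x \<inter> {m..})) (Dset S x \<inter> {m..})"
proof -
  let ?M = "Dset S x \<inter> {m..}"
  have "finite ?M" by (rule finite_subset[of _ "{..x}"]) (auto simp: Dset_def)
  moreover have "Min ?M = m" using \<open>finite ?M\<close> assms(2) by (intro Min_eqI) auto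
  moreover have "Dset S y \<inter> {m..} \<subseteq> ?M" if "y \<in> ?M" for y
    using that Dset_trans[OF assms(1)] by blast
  ultimately show ?thesis using assms(2,3) unfolding amenable_def by (auto simp: Dset_def)
qed

lemma mem_Jset_iff:
  assumes "0 < a"
  shows "j \<in> Jset a b m M \<longleftrightarrow> (\<exists>z\<in>M. m + b \<le> z \<and> j = (z - (m + b)) mod a)"
proof
  assume "j \<in> Jset a b m M"
  then obtain z Q where "z \<in> M" "j < a" "0 \<le> Q" and z: "int z - int (m + b) = Q * int a + int j"
    unfolding Jset_def by auto
  have "0 \<le> Q * int a" using \<open>0 \<le> Q\<close> by simp
  then have "m + b \<le> z" using z by linarith
  with z have "int (z - (m + b)) = int (nat Q * a + j)" using \<open>0 \<le> Q\<close> by (simp add: of_nat_diff)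
  then have "z - (m + b) = nat Q * a + j" by (simp only: of_nat_eq_iff)
  then show "\<exists>z\<in>M. m + b \<le> z \<and> j = (z - (m + b)) mod a"
    using \<open>z \<in> M\<close> \<open>m + b \<le> z\<close> \<open>j < a\<close> by auto
next
  assume "\<exists>z\<in>M. m + b \<le> z \<and> j = (z - (m + b)) mod a"
  then obtain z where "z \<in> M" "m + b \<le> z" "j = (z - (m + b)) mod a" by blast
  moreover have "z - (m + b) = (z - (m + b)) div a * a + j"
    using calculation(3) div_mult_mod_eq[of "z - (m + b)" a] by simp
  then have "int z - int (m + b) = int ((z - (m + b)) div a) * int a + int j"
    using calculation(2) by (metis of_nat_add of_nat_diff of_nat_mult)
  moreover have "j < a" using calculation(3) assms by simp
  ultimately show "j \<in> Jset a b m M"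
    unfolding Jset_def by (intro CollectI conjI bexI[of _ z] exI[of _ "int ((z - (m + b)) div a)"]) auto
qed

lemma nsg_sub_generator:
  assumes "0 < b" "q * b < a"
    and "u \<in> nsg a b" "u + b \<in> nsg a b" "u + b \<le> q * (a + b)"
  shows "a \<le> u" "u - a \<in> nsg a b"
proof -
  obtain k where k: "k \<le> q" "k * a \<le> u" "u \<le> k * (a + b)"
    using nsg_bounded_level[of u a b q] assms(2,3,5) by auto
  obtain l where l: "l \<le> q" "l * a \<le> u + b" "u + b \<le> l * (a + b)"
    using nsg_bounded_level[of "u + b" a b q] assms(2,4,5) by auto
  have "0 < q" using assms(1,5) by (cases q) auto
  then have "1 * b \<le> q * b" by (intro mult_le_mono1) simp
  then have "b < a" using assms(2) by linarith
  then have "u \<noteq> 0" using nsg_not_mem_below[of b a b] assms(1,4) by (metis add_0)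
  then obtain k' where k': "k = Suc k'" using k(3) by (cases k) auto
  have "l \<le> k" \<comment> \<open>level \<open>k + 1\<close> starts above \<open>k (a + b) + b\<close> because \<open>q b < a\<close>\<close>
  proof (rule ccontr)
    assume "\<not> l \<le> k"
    then have "Suc k * a \<le> u + b" using l(2) by (meson le_trans mult_le_mono1 not_le Suc_leI)
    moreover have "Suc k * b \<le> q * b" using \<open>\<not> l \<le> k\<close> l(1) by (intro mult_le_mono1) simp
    ultimately show False using k(3) assms(2) by (simp add: algebra_simps)
  qed
  then have "u + b \<le> k * (a + b)" using l(3) by (meson le_trans mult_le_mono1)
  then have "k' * a \<le> u - a" "u - a \<le> k' * (a + b)" using k(2) by (simp_all add: k' algebra_simps)
  then show "u - a \<in> nsg a b" unfolding mem_nsg_iff by blast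
  show "a \<le> u" using k(2) by (simp add: k')
qed

locale divisors_of_peak =
  fixes a b m q :: nat
  assumes b_pos: "0 < b" and b_less_a: "b < a"
    and m_bound: "2 * conductor (nsg a b) - 1 \<le> m"
    and q_pos: "0 < q" and qb_less_a: "q * b < a"
begin

lemma a_pos: "0 < a"
  using b_less_a by simp

abbreviation peak :: nat where "peak \<equiv> m + q * (a + b)"

definition M :: "nat set" where "M = Dset (nsg a b) peak \<inter> {m..}"

lemma mem_nsg_atLeast_m: "m \<le> n \<Longrightarrow> n \<in> nsg a b"
  using mem_nsg_above[OF _ b_pos m_bound] b_pos b_less_a by simp

lemma mem_M_iff: "z \<in> M \<longleftrightarrow> m \<le> z \<and> z \<le> peak \<and> peak - z \<in> nsg a b"
  unfolding M_def by (rule mem_Dset_atLeast_iff) (rule mem_nsg_atLeast_m)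

lemma m_mem_M: "m \<in> M"
proof -
  have "q * (a + b) \<in> nsg a b" unfolding mem_nsg_iff by (intro exI[of _ q]) (simp add: algebra_simps)
  then show ?thesis by (simp add: mem_M_iff)
qed

lemma peak_mem_M: "peak \<in> M"
  unfolding mem_M_iff by (simp add: nsg.zero)

lemma amenable_M: "amenable (nsg a b) m (card M) M"
  using amenable_Dset_atLeast[OF nsg_add _ m_bound] m_mem_M unfolding M_def by blast

lemma M_level:
  assumes "z \<in> M"
  obtains k where "k \<le> q" "k * a \<le> peak - z" "peak - z \<le> k * (a + b)"
proof -
  have "peak - z \<in> nsg a b" "peak - z \<le> q * (a + b)" using assms by (auto simp: mem_M_iff)
  then show thesis using nsg_bounded_level qb_less_a that by blast
qed

lemma Jset_M_le:
  assumes "j \<in> Jset a b m M"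
  shows "j \<le> (q - 1) * b"
proof -
  obtain z where z: "z \<in> M" "m + b \<le> z" and j: "j = (z - (m + b)) mod a"
    using assms unfolding mem_Jset_iff[OF a_pos] by blast
  obtain k where k: "k \<le> q" "k * a \<le> peak - z" "peak - z \<le> k * (a + b)"
    using M_level[OF z(1)] .
  have z_le: "z \<le> peak" using z(1) by (simp add: mem_M_iff)
  have qb: "q * b = (q - 1) * b + b" using q_pos by (cases q) auto
  show ?thesis
  proof (cases "k < q")
    case True
    define e where "e = peak - z - k * a"
    have "e \<le> k * b" using k(3) by (simp add: e_def algebra_simps)
    also have "\<dots> \<le> (q - 1) * b" using True by (intro mult_le_mono1) simp
    finally have e: "e \<le> (q - 1) * b" .
    have "(q - k) * a + k * a = q * a" using True by (simp flip: add_mult_distrib)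
    then have "z - (m + b) = (q - k) * a + ((q - 1) * b - e)"
      using k(2) e z_le z(2) qb by (simp add: e_def algebra_simps)
    moreover have "(q - 1) * b - e < a"
      using qb qb_less_a by linarith
    ultimately show ?thesis using j by simp
  next
    case False
    then have "q * a \<le> peak - z" using k(1,2) by simp
    moreover have "peak = m + q * a + q * b" by (simp add: algebra_simps)
    ultimately have "z - (m + b) \<le> (q - 1) * b" using qb z_le by linarith
    then show ?thesis using j mod_less_eq_dividend le_trans by metis
  qed
qed

lemma Jset_M_mem: "(q - 1) * b \<in> Jset a b m M"
proof -
  have "peak - (m + b) = q * a + (q - 1) * b" using q_pos by (cases q) (auto simp: algebra_simps)
  moreover have "(q - 1) * b \<le> q * b" by (intro mult_le_mono1) simp
  then have "(q - 1) * b < a" using qb_less_a by linarith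
  moreover have "m + b \<le> peak" using q_pos by (cases q) auto
  ultimately show ?thesis
    using peak_mem_M unfolding mem_Jset_iff[OF a_pos] by (intro bexI[of _ peak] conjI) simp_all
qed

lemma Max_Jset_M: "Max (Jset a b m M) = (q - 1) * b"
proof (rule Max_eqI)
  show "finite (Jset a b m M)"
    by (rule finite_subset[of _ "{..<a}"]) (auto simp: Jset_def)
qed (use Jset_M_mem Jset_M_le in auto)

lemma is_pivot_peak: "is_pivot a b m M peak"
proof -
  have "peak \<in> wagon a b m M"
    using peak_mem_M q_pos unfolding wagon_def Max_Jset_M
    by (auto intro!: exI[of _ "int q"] simp: algebra_simps of_nat_diff)
  moreover have "finite (wagon a b m M)"
    by (rule finite_subset[of _ "{..peak}"]) (auto simp: wagon_def mem_M_iff)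
  ultimately have "Max (wagon a b m M) = peak"
    by (intro Max_eqI) (auto simp: wagon_def mem_M_iff)
  moreover have "Jset a b m M \<noteq> {}"
    using Jset_M_mem by blast
  ultimately show ?thesis unfolding is_pivot_def using peak_mem_M by auto
qed

lemma shadow_M: "shadow a b m M = {m..m + q * b}"
proof (intro equalityI subsetI)
  fix z
  assume "z \<in> shadow a b m M"
  then have z: "z \<in> M" "z < m + a + b" unfolding shadow_def by auto
  obtain k where k: "k \<le> q" "k * a \<le> peak - z" "peak - z \<le> k * (a + b)"
    using M_level[OF z(1)] .
  have "k = q"
  proof (rule ccontr)
    assume "k \<noteq> q"
    then have "k * (a + b) \<le> (q - 1) * (a + b)" using k(1) by (intro mult_le_mono1) simp
    moreover have "(q - 1) * (a + b) + (a + b) = q * (a + b)" using q_pos by (cases q) auto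
    ultimately show False using k(3) z(2) by linarith
  qed
  then show "z \<in> {m..m + q * b}" using k(2) z(1) by (auto simp: mem_M_iff algebra_simps)
next
  fix z
  assume z: "z \<in> {m..m + q * b}"
  then have "peak - z \<in> nsg a b"
    unfolding mem_nsg_iff by (intro exI[of _ q]) (auto simp: algebra_simps)
  then show "z \<in> shadow a b m M"
    using z qb_less_a unfolding shadow_def by (auto simp: mem_M_iff algebra_simps)
qed

lemma no_shadow_preserving_extension:
  assumes s: "s \<in> nsg a b - M"
    and amenable_ext: "amenable (nsg a b) m (card M + 1) (M \<union> {s})"
    and same_shadow: "shadow a b m (M \<union> {s}) = shadow a b m M"
  shows False
proof -
  have "m \<le> s" and closed: "Dset (nsg a b) s \<inter> {m..} \<subseteq> M \<union> {s}"
    using amenable_ext unfolding amenable_def by (metis Min_le UnI2 insertI1, blast)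
  have "m + a + b \<le> s"
  proof (rule ccontr)
    assume "\<not> m + a + b \<le> s"
    then have "s \<in> shadow a b m (M \<union> {s})" using \<open>m \<le> s\<close> unfolding shadow_def by auto
    then show False using s same_shadow unfolding shadow_def by auto
  qed
  have "s - g \<in> M" if "g \<in> {a, a + b}" for g
  proof -
    have "g \<in> nsg a b" using that unfolding mem_nsg_iff by (auto intro: exI[of _ 1])
    then have "s - g \<in> Dset (nsg a b) s \<inter> {m..}"
      using that \<open>m + a + b \<le> s\<close> mem_nsg_atLeast_m[of "s - g"] by (auto simp: Dset_def)
    moreover have "s - g \<noteq> s" using that \<open>m + a + b \<le> s\<close> a_pos by auto
    ultimately show ?thesis using closed by blast
  qed
  then have "s - a \<in> M" "s - (a + b) \<in> M" by auto
  define u where "u = peak - (s - a)"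
  have "u + b = peak - (s - (a + b))"
    using \<open>s - a \<in> M\<close> \<open>m + a + b \<le> s\<close> by (auto simp: u_def mem_M_iff)
  then have "u \<in> nsg a b" "u + b \<in> nsg a b" "u + b \<le> q * (a + b)"
    using \<open>s - a \<in> M\<close> \<open>s - (a + b) \<in> M\<close> \<open>m + a + b \<le> s\<close> by (auto simp: u_def mem_M_iff)
  then have "a \<le> u" "u - a \<in> nsg a b" using nsg_sub_generator b_pos qb_less_a by blast+
  moreover have "u - a = peak - s" using \<open>m + a + b \<le> s\<close> by (simp add: u_def)
  moreover have "s \<le> peak"
  proof -
    have "s - a \<le> peak" using \<open>s - a \<in> M\<close> by (simp add: mem_M_iff)
    then have "a + (s - a) \<le> peak" using \<open>a \<le> u\<close> le_diff_conv2 unfolding u_def by blast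
    then show ?thesis using \<open>m + a + b \<le> s\<close> by simp
  qed
  ultimately have "s \<in> M" using \<open>m \<le> s\<close> by (auto simp: mem_M_iff)
  then show False using s by blast
qed

end

theorem lemma4p14:
  fixes a b m q :: nat
  assumes "0 < b" and "b < a"
    and "2 * conductor (nsg a b) - 1 \<le> m"
    and "0 < q" and "q * b < a"
  shows "ordered_amenable a b m
           (card (Dset (nsg a b) (m + q * a + q * b) \<inter> {m..}))
           (Dset (nsg a b) (m + q * a + q * b) \<inter> {m..})"
proof -
  interpret divisors_of_peak a b m q
    using assms by unfold_locales
  have "ordered_amenable a b m (card M) M"
    unfolding ordered_amenable_def
  proof (intro conjI exI)
    show "amenable (nsg a b) m (card M) M" by (rule amenable_M)
    show "is_pivot a b m M peak" by (rule is_pivot_peak)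
    show "q * b < a + b - 1" using assms(1,5) by linarith
    show "shadow a b m M = {m..m + q * b}" by (rule shadow_M)
    show "\<forall>s\<in>nsg a b - M. amenable (nsg a b) m (card M + 1) (M \<union> {s}) \<and>
        shadow a b m (M \<union> {s}) = shadow a b m M \<longrightarrow> s = peak + a"
      using no_shadow_preserving_extension by blast
  qed
  then show ?thesis by (simp add: M_def algebra_simps)
qed

end
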